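(* Let $k\geq2$ be an integer. The function $\psi_k(x)$ is strictly decreasing on $x>k$.
   Context: $f_t(\lambda)=e^{-\lambda}\sum_{i\geq t}\lambda^i/i!$. For $x>k$, let $\lambda=\lambda(x)>0$ be the unique positive root of $\lambda f_{k-1}(\lambda)=xf_k(\lambda)$, and define $\psi_k(x)=\frac{e^{-\lambda}\lambda^{k-1}}{f_{k-1}(\lambda)\,(k-1)!}$. *)

theory Defs
  imports "HOL-Analysis.Analysis"
begin

definition poisson_tail :: "nat \<Rightarrow> real \<Rightarrow> real" where
  "poisson_tail t lam = exp (- lam) * (\<Sum>i. if t \<le> i then lam ^ i / fact i else 0)"

definition lam_root :: "nat \<Rightarrow> real \<Rightarrow> real" where
  "lam_root k x = (THE lam. lam > 0 \<and> lam * poisson_tail (k - 1) lam = x * poisson_tail k lam)"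

definition psi :: "nat \<Rightarrow> real \<Rightarrow> real" where
  "psi k x = (let lam = lam_root k x in
     exp (- lam) * lam ^ (k - 1) / (poisson_tail (k - 1) lam * fact (k - 1)))"

end

theory Submission
  imports Defs
begin

text \<open>Write S_t(l) for the sum of l^i/i! over i \<ge> t. The equation defining \<lambda>(x) says
  g(\<lambda>) = x, where g(l) = l S_{k-1}(l) / S_k(l) is the mean of the index i \<ge> k under the
  weights l^i/i!. This mean is strictly increasing in l (symmetrise the cross-multiplied
  inequality, as in Chebyshev's sum inequality), and l \<le> g(l) \<le> l + k, so \<lambda>(x) is well
  defined and strictly increasing on x > k. Finally \<psi>_k(x) = \<lambda>^{k-1} / ((k-1)! S_{k-1}(\<lambda>)),
  and S_{k-1}(l) / l^{k-1}, the sum of l^{i-k+1}/i! over i \<ge> k-1, is strictly increasing in l.\<close>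

definition exp_tail :: "nat \<Rightarrow> real \<Rightarrow> real" where
  "exp_tail t l = (\<Sum>i. if t \<le> i then l ^ i / fact i else 0)"

lemma poisson_tail_eq_exp_tail: "poisson_tail t l = exp (- l) * exp_tail t l"
  by (simp add: poisson_tail_def exp_tail_def)

lemma exp_tail_sums:
  "(\<lambda>i. if t \<le> i then (l::real) ^ i / fact i else 0) sums (exp l - (\<Sum>i<t. l ^ i / fact i))"
proof -
  have "(\<lambda>i. l ^ i /\<^sub>R fact i) = (\<lambda>i. l ^ i / fact i)"
    by (simp add: fun_eq_iff divide_inverse_commute)
  then have "(\<lambda>i. l ^ i / fact i) sums exp l"
    using exp_converges[of l] by metis
  moreover have "(\<lambda>i. l ^ i / fact i - (if i \<in> {..<t} then l ^ i / fact i else 0))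
      = (\<lambda>i. if t \<le> i then l ^ i / fact i else 0)"
    by (auto simp: fun_eq_iff)
  ultimately show ?thesis
    using sums_diff sums_If_finite_set[of "{..<t}" "\<lambda>i. l ^ i / fact i"] by fastforce
qed

lemma summable_exp_tail: "summable (\<lambda>i. if t \<le> i then (l::real) ^ i / fact i else 0)"
  using exp_tail_sums sums_summable by blast

lemma exp_tail_eq: "exp_tail t l = exp l - (\<Sum>i<t. l ^ i / fact i)"
  unfolding exp_tail_def using exp_tail_sums sums_unique by metis

lemma exp_tail_Suc: "exp_tail n l = l ^ n / fact n + exp_tail (Suc n) l"
  by (simp add: exp_tail_eq)

lemma exp_tail_nonneg: "0 \<le> l \<Longrightarrow> 0 \<le> exp_tail t l"
  unfolding exp_tail_def by (rule suminf_nonneg[OF summable_exp_tail]) auto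

lemma exp_tail_ge_term: "0 \<le> l \<Longrightarrow> l ^ t / fact t \<le> exp_tail t l"
  using exp_tail_Suc[of t l] exp_tail_nonneg[of l "Suc t"] by linarith

lemma exp_tail_pos: "0 < l \<Longrightarrow> 0 < exp_tail t l"
  by (intro less_le_trans[OF _ exp_tail_ge_term] divide_pos_pos zero_less_power) auto

lemma continuous_on_exp_tail: "continuous_on A (exp_tail t)"
  unfolding exp_tail_eq[abs_def] by (intro continuous_intros) auto

lemma exp_tail_index_sums:
  "(\<lambda>i. if Suc n \<le> i then real i * l ^ i / fact i else 0) sums (l * exp_tail n l)"
proof -
  let ?f = "\<lambda>i. if Suc n \<le> i then real i * l ^ i / fact i else 0"
  have "(\<lambda>i. l * (if n \<le> i then l ^ i / fact i else 0)) sums (l * exp_tail n l)"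
    unfolding exp_tail_def by (rule sums_mult[OF summable_sums[OF summable_exp_tail]])
  moreover have "(\<lambda>i. ?f (Suc i)) = (\<lambda>i. l * (if n \<le> i then l ^ i / fact i else 0))"
  proof
    fix i
    have "real (Suc i) * l ^ Suc i / fact (Suc i) = l * (l ^ i / fact i)"
      by (simp add: fact_Suc del: of_nat_Suc)
    then show "?f (Suc i) = l * (if n \<le> i then l ^ i / fact i else 0)"
      by auto
  qed
  ultimately have "(\<lambda>i. ?f (Suc i)) sums (l * exp_tail n l)"
    by simp
  then show ?thesis
    by (subst (asm) sums_Suc_iff) simp
qed

lemma power_cross_le:
  fixes l m :: real
  assumes "0 \<le> l" "l \<le> m" "i \<le> j"
  shows "m ^ i * l ^ j \<le> m ^ j * l ^ i"
proof -
  obtain d where j: "j = i + d" using assms le_Suc_ex by blast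
  have "l ^ d \<le> m ^ d" using assms by (intro power_mono) auto
  then have "m ^ i * l ^ i * l ^ d \<le> m ^ i * l ^ i * m ^ d"
    using assms by (intro mult_left_mono) auto
  then show ?thesis by (simp add: j power_add algebra_simps)
qed

lemma exp_tail_div_power_mono:
  assumes "0 < l" "l \<le> m"
  shows "exp_tail t l / l ^ t \<le> exp_tail t m / m ^ t"
proof -
  have "(\<Sum>i. (if t \<le> i then l ^ i / fact i else 0) * m ^ t)
      \<le> (\<Sum>i. (if t \<le> i then m ^ i / fact i else 0) * l ^ t)"
  proof (rule suminf_le)
    fix i
    have "t \<le> i \<Longrightarrow> m ^ t * l ^ i / fact i \<le> m ^ i * l ^ t / fact i"
      using power_cross_le[of l m t i] assms by (simp add: divide_right_mono)
    then show "(if t \<le> i then l ^ i / fact i else 0) * m ^ t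
        \<le> (if t \<le> i then m ^ i / fact i else 0) * l ^ t"
      by (simp add: algebra_simps)
  qed (intro summable_mult2 summable_exp_tail)+
  then have "exp_tail t l * m ^ t \<le> exp_tail t m * l ^ t"
    unfolding exp_tail_def by (simp add: suminf_mult2[OF summable_exp_tail])
  then show ?thesis
    using assms by (simp add: divide_simps)
qed

lemma exp_tail_div_power_strict_mono: "strict_mono_on {0<..} (\<lambda>l. exp_tail n l / l ^ n)"
proof (rule monotone_onI)
  fix l m :: real
  assume "l \<in> {0<..}" "m \<in> {0<..}" "l < m"
  then have lm: "0 < l" "l < m" by auto
  have split: "exp_tail n x / x ^ n = 1 / fact n + x * (exp_tail (Suc n) x / x ^ Suc n)" if "0 < x" for x
    using that by (subst exp_tail_Suc) (simp add: add_divide_distrib)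
  have "l * (exp_tail (Suc n) l / l ^ Suc n) < m * (exp_tail (Suc n) l / l ^ Suc n)"
    using lm exp_tail_pos[of l "Suc n"] by (intro mult_strict_right_mono) auto
  also have "\<dots> \<le> m * (exp_tail (Suc n) m / m ^ Suc n)"
    using lm exp_tail_div_power_mono[of l m "Suc n"] by (intro mult_left_mono) auto
  finally show "exp_tail n l / l ^ n < exp_tail n m / m ^ n"
    using split[of l] split[of m] lm by simp
qed

lemma index_weighted_power_sum_gap:
  fixes c :: "nat \<Rightarrow> real"
  assumes c: "\<And>i. 0 \<le> c i" and "Suc p < K" and lm: "0 < l" "l < m"
  shows "c p * c (Suc p) * (m ^ Suc p * l ^ p - m ^ p * l ^ Suc p)
    \<le> (\<Sum>i<K. real i * c i * m ^ i) * (\<Sum>j<K. c j * l ^ j)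
      - (\<Sum>i<K. real i * c i * l ^ i) * (\<Sum>j<K. c j * m ^ j)"
proof -
  define w where "w i j = real i * c i * c j * (m ^ i * l ^ j - l ^ i * m ^ j)" for i j
  define v where "v i j = (real i - real j) * c i * c j * (m ^ i * l ^ j - m ^ j * l ^ i)" for i j
  have v_nonneg: "0 \<le> v i j" for i j
  proof -
    have "0 \<le> (real i - real j) * (m ^ i * l ^ j - m ^ j * l ^ i)"
      using power_cross_le[of l m i j] power_cross_le[of l m j i] lm
      by (cases "i \<le> j") (auto intro: mult_nonpos_nonpos)
    moreover have "v i j = c i * c j * ((real i - real j) * (m ^ i * l ^ j - m ^ j * l ^ i))"
      by (simp add: v_def algebra_simps)
    ultimately show ?thesis
      using c[of i] c[of j] by simp
  qed
  have "(\<Sum>i<K. real i * c i * m ^ i) * (\<Sum>j<K. c j * l ^ j)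
      - (\<Sum>i<K. real i * c i * l ^ i) * (\<Sum>j<K. c j * m ^ j) = (\<Sum>i<K. \<Sum>j<K. w i j)"
    unfolding sum_product by (simp add: sum_subtractf[symmetric] w_def algebra_simps)
  also have "\<dots> = (\<Sum>i<K. \<Sum>j<K. v i j) / 2"
  proof -
    have "(\<Sum>i<K. \<Sum>j<K. v i j) = (\<Sum>i<K. \<Sum>j<K. w i j) + (\<Sum>i<K. \<Sum>j<K. w j i)"
      by (simp add: sum.distrib[symmetric] v_def w_def algebra_simps)
    moreover have "(\<Sum>i<K. \<Sum>j<K. w j i) = (\<Sum>i<K. \<Sum>j<K. w i j)"
      by (rule sum.swap)
    ultimately show ?thesis
      by simp
  qed
  finally have diff: "(\<Sum>i<K. real i * c i * m ^ i) * (\<Sum>j<K. c j * l ^ j)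
      - (\<Sum>i<K. real i * c i * l ^ i) * (\<Sum>j<K. c j * m ^ j) = (\<Sum>i<K. \<Sum>j<K. v i j) / 2" .
  \<comment> \<open>every term of the symmetrised double sum is nonnegative; keep those at \<open>(p, p+1)\<close>, \<open>(p+1, p)\<close>\<close>
  have "(\<Sum>q\<in>{(Suc p, p), (p, Suc p)}. v (fst q) (snd q))
      \<le> (\<Sum>q\<in>{..<K} \<times> {..<K}. v (fst q) (snd q))"
    using assms by (intro sum_mono2) (auto simp: v_nonneg)
  also have "\<dots> = (\<Sum>i<K. \<Sum>j<K. v i j)"
    by (simp add: sum.cartesian_product case_prod_beta)
  finally show ?thesis
    unfolding diff by (simp add: v_def algebra_simps)
qed

lemma index_weighted_power_series_gap:
  fixes c :: "nat \<Rightarrow> real"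
  assumes c: "\<And>i. 0 \<le> c i" "0 < c p" "0 < c (Suc p)" and lm: "0 < l" "l < m"
    and sums: "(\<lambda>i. c i * l ^ i) sums Sl" "(\<lambda>i. c i * m ^ i) sums Sm"
      "(\<lambda>i. real i * c i * l ^ i) sums Nl" "(\<lambda>i. real i * c i * m ^ i) sums Nm"
  shows "Nl * Sm < Nm * Sl"
proof -
  define \<delta> where "\<delta> = c p * c (Suc p) * (m ^ Suc p * l ^ p - m ^ p * l ^ Suc p)"
  have "m ^ p * l ^ Suc p < m ^ Suc p * l ^ p"
    using lm by (simp add: mult.assoc mult.left_commute[of _ "l ^ p"] mult_strict_left_mono)
  then have "0 < \<delta>"
    using c by (simp add: \<delta>_def)
  have "(\<lambda>K. (\<Sum>i<K. real i * c i * m ^ i) * (\<Sum>j<K. c j * l ^ j)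
      - (\<Sum>i<K. real i * c i * l ^ i) * (\<Sum>j<K. c j * m ^ j)) \<longlonglongrightarrow> Nm * Sl - Nl * Sm"
    using sums unfolding sums_def by (intro tendsto_intros)
  moreover have "eventually (\<lambda>K. \<delta> \<le> (\<Sum>i<K. real i * c i * m ^ i) * (\<Sum>j<K. c j * l ^ j)
      - (\<Sum>i<K. real i * c i * l ^ i) * (\<Sum>j<K. c j * m ^ j)) sequentially"
    using eventually_gt_at_top[of "Suc p"]
    by eventually_elim (unfold \<delta>_def, rule index_weighted_power_sum_gap[OF c(1) _ lm])
  ultimately have "\<delta> \<le> Nm * Sl - Nl * Sm"
    by (rule tendsto_lowerbound) simp
  with \<open>0 < \<delta>\<close> show ?thesis
    by linarith
qed

lemma exp_tail_cross_less:
  assumes "0 < l" "l < m"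
  shows "l * exp_tail n l * exp_tail (Suc n) m < m * exp_tail n m * exp_tail (Suc n) l"
proof -
  define c where "c i = (if Suc n \<le> i then 1 / fact i else 0 :: real)" for i
  have S: "(\<lambda>i. c i * x ^ i) sums exp_tail (Suc n) x" for x
  proof -
    have "(\<lambda>i. c i * x ^ i) = (\<lambda>i. if Suc n \<le> i then x ^ i / fact i else 0)"
      by (simp add: fun_eq_iff c_def)
    then show ?thesis
      unfolding exp_tail_def using summable_sums[OF summable_exp_tail] by simp
  qed
  have N: "(\<lambda>i. real i * c i * x ^ i) sums (x * exp_tail n x)" for x
  proof -
    have "(\<lambda>i. real i * c i * x ^ i) = (\<lambda>i. if Suc n \<le> i then real i * x ^ i / fact i else 0)"
      by (simp add: fun_eq_iff c_def)
    then show ?thesis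
      using exp_tail_index_sums by simp
  qed
  show ?thesis
    using index_weighted_power_series_gap[OF _ _ _ assms S S N N, of "Suc n"]
    by (simp add: c_def mult_ac)
qed

text \<open>The mean of a Poisson(l) variable conditioned on exceeding n; the root condition
  defining \<open>lam_root (Suc n) x\<close> says exactly \<open>tail_mean n l = x\<close>.\<close>
definition tail_mean :: "nat \<Rightarrow> real \<Rightarrow> real" where
  "tail_mean n l = l * exp_tail n l / exp_tail (Suc n) l"

lemma tail_mean_strict_mono: "strict_mono_on {0<..} (tail_mean n)"
proof (rule monotone_onI)
  fix l m :: real
  assume "l \<in> {0<..}" "m \<in> {0<..}" "l < m"
  then have lm: "0 < l" "l < m" by auto
  then have "0 < exp_tail (Suc n) l" "0 < exp_tail (Suc n) m"
    by (auto intro: exp_tail_pos)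
  with exp_tail_cross_less[OF lm, of n] show "tail_mean n l < tail_mean n m"
    unfolding tail_mean_def by (simp add: pos_divide_less_eq pos_less_divide_eq)
qed

lemma tail_mean_eq: "0 < l \<Longrightarrow> tail_mean n l = l + l ^ Suc n / (fact n * exp_tail (Suc n) l)"
  using exp_tail_pos[of l "Suc n"]
  by (simp add: tail_mean_def exp_tail_Suc[of n l] field_simps)

lemma tail_mean_bounds:
  assumes "0 < l"
  shows "l \<le> tail_mean n l" "tail_mean n l \<le> l + Suc n"
proof -
  have S: "0 < exp_tail (Suc n) l"
    using assms by (rule exp_tail_pos)
  then show "l \<le> tail_mean n l"
    using assms by (simp add: tail_mean_eq)
  have "l ^ Suc n / fact (Suc n) \<le> exp_tail (Suc n) l"
    using assms by (intro exp_tail_ge_term) simp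
  then have "l ^ Suc n / (fact n * exp_tail (Suc n) l) \<le> Suc n"
    using S by (simp add: divide_simps mult_ac del: of_nat_Suc)
  then show "tail_mean n l \<le> l + Suc n"
    using assms by (simp add: tail_mean_eq del: of_nat_Suc)
qed

lemma continuous_on_tail_mean: "continuous_on {0<..} (tail_mean n)"
  unfolding tail_mean_def[abs_def]
  by (intro continuous_intros continuous_on_exp_tail) (auto dest: exp_tail_pos[of _ "Suc n"])

lemma tail_mean_surj:
  assumes "real (Suc n) < x"
  shows "\<exists>l>0. tail_mean n l = x"
proof -
  let ?a = "x - Suc n"
  have "tail_mean n ?a \<le> x" "x \<le> tail_mean n x"
    using assms tail_mean_bounds[of ?a n] tail_mean_bounds[of x n] by auto
  moreover have "continuous_on {?a..x} (tail_mean n)"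
    using assms by (intro continuous_on_subset[OF continuous_on_tail_mean]) auto
  ultimately obtain l where "?a \<le> l" "tail_mean n l = x"
    using IVT'[of "tail_mean n" ?a x x] by auto
  moreover have "0 < ?a"
    using assms by simp
  ultimately show ?thesis
    by (intro exI[of _ l]) auto
qed

lemma root_condition_iff_tail_mean:
  "0 < l \<Longrightarrow> l * poisson_tail n l = x * poisson_tail (Suc n) l \<longleftrightarrow> tail_mean n l = x"
  using exp_tail_pos[of l "Suc n"]
  by (auto simp: poisson_tail_eq_exp_tail tail_mean_def divide_simps)

lemma lam_root_tail_mean:
  assumes "real (Suc n) < x"
  shows "0 < lam_root (Suc n) x" "tail_mean n (lam_root (Suc n) x) = x"
proof -
  obtain l where l: "0 < l" "tail_mean n l = x"
    using tail_mean_surj[OF assms] by blast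
  have "\<exists>!l. 0 < l \<and> l * poisson_tail n l = x * poisson_tail (Suc n) l"
  proof (rule ex1I[of _ l])
    fix l'
    assume "0 < l' \<and> l' * poisson_tail n l' = x * poisson_tail (Suc n) l'"
    then have "0 < l'" "tail_mean n l' = tail_mean n l"
      using l root_condition_iff_tail_mean by auto
    then show "l' = l"
      using strict_mono_on_eqD[OF tail_mean_strict_mono] l by auto
  qed (use l root_condition_iff_tail_mean in auto)
  from theI'[OF this]
  have "0 < lam_root (Suc n) x \<and>
      lam_root (Suc n) x * poisson_tail n (lam_root (Suc n) x)
        = x * poisson_tail (Suc n) (lam_root (Suc n) x)"
    unfolding lam_root_def by simp
  then show "0 < lam_root (Suc n) x" "tail_mean n (lam_root (Suc n) x) = x"
    using root_condition_iff_tail_mean by auto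
qed

lemma lam_root_strict_mono: "strict_mono_on {real (Suc n)<..} (lam_root (Suc n))"
proof (rule monotone_onI)
  fix x y
  assume "x \<in> {real (Suc n)<..}" "y \<in> {real (Suc n)<..}" "x < y"
  then have "tail_mean n (lam_root (Suc n) x) < tail_mean n (lam_root (Suc n) y)"
    and "0 < lam_root (Suc n) x" "0 < lam_root (Suc n) y"
    using lam_root_tail_mean[of n x] lam_root_tail_mean[of n y] by auto
  then show "lam_root (Suc n) x < lam_root (Suc n) y"
    using strict_mono_on_less[OF tail_mean_strict_mono[of n]] by auto
qed

lemma power_div_exp_tail_strict_antimono:
  "strict_antimono_on {0<..} (\<lambda>l. l ^ n / (fact n * exp_tail n l))"
proof (rule monotone_onI)
  fix l m :: real
  assume lm: "l \<in> {0<..}" "m \<in> {0<..}" "l < m"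
  then have "exp_tail n l / l ^ n < exp_tail n m / m ^ n"
    by (rule strict_mono_onD[OF exp_tail_div_power_strict_mono])
  with lm show "m ^ n / (fact n * exp_tail n m) < l ^ n / (fact n * exp_tail n l)"
    using exp_tail_pos[of l n] exp_tail_pos[of m n] by (simp add: divide_simps mult_ac)
qed

lemma psi_Suc_eq:
  "psi (Suc n) x = lam_root (Suc n) x ^ n / (fact n * exp_tail n (lam_root (Suc n) x))"
  by (simp add: psi_def Let_def poisson_tail_eq_exp_tail mult.commute)

theorem lemma51:
  fixes k :: nat
  assumes "k \<ge> 2"
  shows "strict_antimono_on {real k<..} (psi k)"
proof -
  obtain n where k: "k = Suc n"
    using assms by (cases k) auto
  show ?thesis
  proof (rule monotone_onI)
    fix x y
    assume xy: "x \<in> {real k<..}" "y \<in> {real k<..}" "x < y"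
    then have "lam_root k x < lam_root k y"
      unfolding k by (rule strict_mono_onD[OF lam_root_strict_mono])
    moreover have "0 < lam_root k x"
      using xy lam_root_tail_mean(1)[of n x] k by simp
    ultimately have "lam_root k y ^ n / (fact n * exp_tail n (lam_root k y))
        < lam_root k x ^ n / (fact n * exp_tail n (lam_root k x))"
      by (intro monotone_onD[OF power_div_exp_tail_strict_antimono]) auto
    then show "psi k y < psi k x"
      unfolding k psi_Suc_eq .
  qed
qed

end
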